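(* Let $x\in\mathbb{R}\setminus D$. Then $$d_-T(x)\le \liminf_{n\to\infty} G_n'(x)+1\qquad\text{and}\qquad D^+T(x)\ge \limsup_{n\to\infty} G_n'(x)-1 .$$
   Context: Let $\phi(x)=\operatorname{dist}(x,\mathbb{Z})$ and let $T:\mathbb{R}\to\mathbb{R}$ be the Takagi function $T(x)=\sum_{n=0}^\infty 2^{-n}\phi(2^nx)$. For $n\ge1$ let $D_n=\{k/2^{n-1}:k\in\mathbb{Z}\}$ and let $D=\bigcup_n D_n$ be the set of dyadic rationals. Let $g_k(x)=\operatorname{dist}(x,D_k)$ and $G_n=g_1+\dots+g_n$, so that $T=\sum_{k\ge1}g_k=\lim_n G_n$ pointwise. For $x\notin D$ each $g_k$ is differentiable at $x$ with $g_k'(x)\in\{-1,1\}$, so $G_n'(x)$ is a well-defined integer. For $f:\mathbb{R}\to\mathbb{R}$ the Dini derivatives are $d_-f(x)=\liminf_{h\uparrow0}\frac{f(x+h)-f(x)}{h}$ and $D^+f(x)=\limsup_{h\downarrow0}\frac{f(x+h)-f(x)}{h}$. *)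

theory Defs
  imports "HOL-Analysis.Analysis"
begin

definition phi :: "real \<Rightarrow> real" where
  "phi x = infdist x (range real_of_int)"

definition takagi :: "real \<Rightarrow> real" where
  "takagi x = (\<Sum>n. phi (2 ^ n * x) / 2 ^ n)"

definition dyad_level :: "nat \<Rightarrow> real set" where
  "dyad_level n = {real_of_int k / 2 ^ (n - 1) | k. True}"

definition dyadics :: "real set" where
  "dyadics = (\<Union>n\<in>{1..}. dyad_level n)"

definition gk :: "nat \<Rightarrow> real \<Rightarrow> real" where
  "gk k x = infdist x (dyad_level k)"

definition Gn :: "nat \<Rightarrow> real \<Rightarrow> real" where
  "Gn n x = (\<Sum>k=1..n. gk k x)"

definition dini_lower_left :: "(real \<Rightarrow> real) \<Rightarrow> real \<Rightarrow> ereal" where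
  "dini_lower_left f x = Liminf (at_left 0) (\<lambda>h. ereal ((f (x + h) - f x) / h))"

definition dini_upper_right :: "(real \<Rightarrow> real) \<Rightarrow> real \<Rightarrow> ereal" where
  "dini_upper_right f x = Limsup (at_right 0) (\<lambda>h. ereal ((f (x + h) - f x) / h))"

end

theory Submission
  imports Defs
begin

text \<open>Write \<open>T = \<Sum>\<^sub>k g\<^sub>k\<close>. Fix \<open>N\<close> and let \<open>y\<close> be the mirror image of \<open>x\<close> in the midpoint of the
  dyadic interval \<open>I\<close> of length \<open>2\<^sup>-\<^sup>N\<close> containing \<open>x\<close>. The tents \<open>g\<^sub>k\<close> with \<open>k \<le> N\<close> are affine
  on \<open>I\<close>, while those with \<open>k > N\<close> are symmetric about its midpoint, so
  \<open>(T y - T x) / (y - x) = G\<^sub>N'(x)\<close>, and \<open>y - x\<close> has the sign of \<open>g\<^sub>N\<^sub>+\<^sub>1'(x)\<close>.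
  As \<open>x\<close> is not dyadic, both values \<open>\<plusminus>1\<close> occur infinitely often among the slopes \<open>g\<^sub>k'(x)\<close>.
  Given \<open>c = \<plusminus>1\<close> and large \<open>n\<close>, take \<open>N < n\<close> maximal with \<open>g\<^sub>N\<^sub>+\<^sub>1'(x) = c\<close>; then all later
  slopes up to \<open>g\<^sub>n'(x)\<close> equal \<open>-c\<close>, whence \<open>c (G\<^sub>n'(x) - G\<^sub>N'(x)) \<le> 1\<close>, while the steps \<open>y - x\<close>
  tend to 0 from the side of sign \<open>c\<close>. The case \<open>c = -1\<close> bounds \<open>d\<^sub>-T(x)\<close>, the case \<open>c = 1\<close>
  bounds \<open>D\<^sup>+T(x)\<close>.\<close>

lemma min_frac_le_dist_Ints:
  fixes t :: real
  shows "min (frac t) (1 - frac t) \<le> \<bar>t - of_int k\<bar>"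
proof (cases "k \<le> \<lfloor>t\<rfloor>")
  case True
  then have "real_of_int k \<le> of_int \<lfloor>t\<rfloor>" by simp
  then show ?thesis unfolding frac_def by linarith
next
  case False
  then have "real_of_int k \<ge> of_int \<lfloor>t\<rfloor> + 1" by linarith
  then show ?thesis unfolding frac_def by linarith
qed

lemma infdist_scaled_Ints:
  fixes c x :: real
  assumes "c > 0"
  shows "infdist x {of_int k / c | k. True} = min (frac (c * x)) (1 - frac (c * x)) / c"
proof (rule antisym)
  let ?A = "{of_int k / c | k. True}"
  have dist_eq: "dist x (of_int k / c) = \<bar>c * x - of_int k\<bar> / c" for k
  proof -
    have "x - of_int k / c = (c * x - of_int k) / c" using assms by (simp add: field_simps)
    then show ?thesis using assms by (simp add: dist_real_def)
  qed
  have "infdist x ?A \<le> \<bar>c * x - of_int j\<bar> / c" for j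
    using infdist_le[of "of_int j / c" ?A x] dist_eq by auto
  moreover have "\<bar>c * x - of_int \<lfloor>c * x\<rfloor>\<bar> = frac (c * x)"
    and "\<bar>c * x - of_int (\<lfloor>c * x\<rfloor> + 1)\<bar> = 1 - frac (c * x)"
    using frac_lt_1[of "c * x"] by (simp_all add: frac_def)
  ultimately show "infdist x ?A \<le> min (frac (c * x)) (1 - frac (c * x)) / c"
    by (metis min_def)
  show "min (frac (c * x)) (1 - frac (c * x)) / c \<le> infdist x ?A"
    unfolding infdist_def
    using assms dist_eq min_frac_le_dist_Ints by (auto intro!: cINF_greatest divide_right_mono)
qed

lemma phi_eq_min_frac: "phi t = min (frac t) (1 - frac t)"
proof -
  have "range real_of_int = {of_int k / 1 | k. True}" by auto
  then show ?thesis using infdist_scaled_Ints[of 1 t] by (simp add: phi_def)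
qed

lemma gk_eq_phi: "gk k x = phi (2 ^ (k - 1) * x) / 2 ^ (k - 1)"
  unfolding gk_def dyad_level_def phi_eq_min_frac by (rule infdist_scaled_Ints) simp

lemma phi_bounds: "0 \<le> phi t" "phi t \<le> 1"
  unfolding phi_eq_min_frac using frac_lt_1[of t] by simp_all

lemma phi_Ints_minus:
  assumes "m \<in> \<int>" shows "phi (m - t) = phi t"
proof -
  have frac_eq: "frac (m - t) = frac (- t)" using frac_add_int_left[OF assms, of "- t"] by simp
  show ?thesis
    unfolding phi_eq_min_frac frac_eq
    by (cases "t \<in> \<int>") (simp_all add: frac_neg min.commute frac_eq_0_iff[THEN iffD2])
qed

definition parity_sign :: "int \<Rightarrow> real" where
  "parity_sign J = (if even J then 1 else -1)"

lemma phi_on_half_interval: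
  assumes "of_int J \<le> 2 * t" "2 * t \<le> of_int J + 1"
  shows "phi t = (if even J then t - of_int J / 2 else (of_int J + 1) / 2 - t)"
proof (cases "even J")
  case True
  then obtain i where J: "J = 2 * i" by blast
  have "\<lfloor>t\<rfloor> = i" using assms J by (subst floor_eq_iff) simp
  then show ?thesis using assms J unfolding phi_eq_min_frac frac_def by simp
next
  case False
  then obtain i where J: "J = 2 * i + 1" using oddE by blast
  show ?thesis
  proof (cases "t = of_int i + 1")
    case True
    then show ?thesis using J by (simp add: phi_eq_min_frac)
  next
    case False
    then have "\<lfloor>t\<rfloor> = i" using assms J by (subst floor_eq_iff) simp
    then show ?thesis using assms J \<open>odd J\<close> unfolding phi_eq_min_frac frac_def by simp
  qed
qed

lemma phi_affine_on_half_interval: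
  assumes "of_int J \<le> 2 * t" "2 * t \<le> of_int J + 1"
    and "of_int J \<le> 2 * u" "2 * u \<le> of_int J + 1"
  shows "phi u - phi t = parity_sign J * (u - t)"
  using phi_on_half_interval[OF assms(1,2)] phi_on_half_interval[OF assms(3,4)]
  by (simp add: parity_sign_def algebra_simps)

text \<open>\<open>tent k\<close> is the paper's \<open>g\<^sub>k\<^sub>+\<^sub>1\<close>, and \<open>tent_slope k x\<close> its derivative \<open>\<plusminus>1\<close> off the dyadics.\<close>
definition tent :: "nat \<Rightarrow> real \<Rightarrow> real" where
  "tent k z = phi (2 ^ k * z) / 2 ^ k"

definition tent_slope :: "nat \<Rightarrow> real \<Rightarrow> real" where
  "tent_slope k z = parity_sign \<lfloor>2 ^ Suc k * z\<rfloor>"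

lemma floor_double:
  fixes t :: real
  shows "\<lfloor>2 * t\<rfloor> = 2 * \<lfloor>t\<rfloor> + (if frac t < 1/2 then 0 else 1)"
  unfolding frac_def by (subst floor_eq_iff) (auto, linarith+)

lemma tent_slope_eq: "tent_slope k x = (if frac (2 ^ k * x) < 1/2 then 1 else -1)"
  using floor_double[of "2 ^ k * x"] by (simp add: tent_slope_def parity_sign_def mult.assoc)

lemma tent_slope_cases: "tent_slope k z = 1 \<or> tent_slope k z = -1"
  unfolding tent_slope_def parity_sign_def by auto

lemma tent_affine_on_interval:
  assumes "of_int J \<le> 2 ^ Suc k * t" "2 ^ Suc k * t \<le> of_int J + 1"
    and "of_int J \<le> 2 ^ Suc k * u" "2 ^ Suc k * u \<le> of_int J + 1"
  shows "tent k u - tent k t = parity_sign J * (u - t)"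
proof -
  have "phi (2 ^ k * u) - phi (2 ^ k * t) = parity_sign J * (2 ^ k * u - 2 ^ k * t)"
    by (rule phi_affine_on_half_interval) (use assms in \<open>simp_all add: mult.assoc\<close>)
  then show ?thesis
    unfolding tent_def by (simp add: diff_divide_distrib[symmetric] right_diff_distrib[symmetric])
qed

lemma has_real_derivative_tent:
  assumes "2 ^ Suc k * x \<notin> \<int>"
  shows "(tent k has_real_derivative tent_slope k x) (at x)"
proof -
  define J where "J = \<lfloor>2 ^ Suc k * x\<rfloor>"
  define c :: real where "c = 2 ^ Suc k"
  have "c > 0" unfolding c_def by simp
  have J_less: "of_int J < c * x"
    unfolding J_def c_def using assms by (metis Ints_of_int floor_correct order_le_less)
  have less_J: "c * x < of_int J + 1" unfolding J_def c_def by linarith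
  define S where "S = {of_int J / c <..< (of_int J + 1) / c}"
  have "open S" unfolding S_def by simp
  have "x \<in> S" unfolding S_def using J_less less_J \<open>c > 0\<close> by (simp add: field_simps)
  have affine: "tent k x + parity_sign J * (z - x) = tent k z" if "z \<in> S" for z
  proof -
    have "of_int J < c * z" "c * z < of_int J + 1"
      using that \<open>c > 0\<close> unfolding S_def by (simp_all add: field_simps)
    then have "tent k z - tent k x = parity_sign J * (z - x)"
      using J_less less_J by (intro tent_affine_on_interval) (simp_all add: c_def)
    then show ?thesis by simp
  qed
  have "((\<lambda>z. tent k x + parity_sign J * (z - x)) has_real_derivative parity_sign J) (at x)"
    by (auto intro!: derivative_eq_intros)
  from has_field_derivative_transform_within_open[OF this \<open>open S\<close> \<open>x \<in> S\<close> affine]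
  show ?thesis unfolding tent_slope_def J_def .
qed

lemma not_Ints_if_nondyadic:
  assumes "x \<notin> dyadics" shows "2 ^ m * x \<notin> \<int>"
proof
  assume "2 ^ m * x \<in> \<int>"
  then obtain k where "2 ^ m * x = of_int k" using Ints_cases by blast
  then have "x \<in> dyad_level (Suc m)" unfolding dyad_level_def by (auto simp: field_simps)
  then show False using assms unfolding dyadics_def by auto
qed

lemma Gn_eq_sum_tent: "Gn n = (\<lambda>z. \<Sum>k<n. tent k z)"
proof
  fix z show "Gn n z = (\<Sum>k<n. tent k z)"
    by (induction n) (simp_all add: Gn_def gk_eq_phi tent_def)
qed

lemma deriv_Gn:
  assumes "x \<notin> dyadics"
  shows "deriv (Gn n) x = (\<Sum>k<n. tent_slope k x)"
  unfolding Gn_eq_sum_tent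
  by (intro DERIV_imp_deriv DERIV_sum has_real_derivative_tent not_Ints_if_nondyadic assms)

lemma summable_tent: "summable (\<lambda>k. tent k z)"
proof (rule summable_comparison_test[of _ "\<lambda>k. (1/2) ^ k"])
  show "\<exists>N. \<forall>n\<ge>N. norm (tent n z) \<le> (1/2) ^ n"
    using phi_bounds by (auto simp: tent_def power_divide divide_right_mono)
qed simp

lemma takagi_eq_suminf_tent: "takagi z = (\<Sum>k. tent k z)"
  unfolding takagi_def tent_def ..

text \<open>The mirror image of \<open>x\<close> in the midpoint \<open>(F + 1/2) / 2^N\<close> of the dyadic interval
  \<open>[F / 2^N, (F + 1) / 2^N]\<close> containing it.\<close>
definition dyadic_reflect :: "nat \<Rightarrow> real \<Rightarrow> real" where
  "dyadic_reflect N x = (2 * of_int \<lfloor>2 ^ N * x\<rfloor> + 1) / 2 ^ N - x"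

lemma tent_dyadic_reflect_high:
  assumes "N \<le> k"
  shows "tent k (dyadic_reflect N x) = tent k x"
proof -
  have "2 ^ k * dyadic_reflect N x = (2 * of_int \<lfloor>2 ^ N * x\<rfloor> + 1) * 2 ^ (k - N) - 2 ^ k * x"
    unfolding dyadic_reflect_def using assms by (simp add: field_simps power_diff)
  moreover have "(2 * of_int \<lfloor>2 ^ N * x\<rfloor> + 1) * (2::real) ^ (k - N) \<in> \<int>" by simp
  ultimately show ?thesis unfolding tent_def by (simp add: phi_Ints_minus)
qed

lemma tent_dyadic_reflect_low:
  assumes "k < N"
  shows "tent k (dyadic_reflect N x) - tent k x = tent_slope k x * (dyadic_reflect N x - x)"
proof -
  define F where "F = \<lfloor>2 ^ N * x\<rfloor>"
  define q :: int where "q = 2 ^ (N - Suc k)"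
  define J where "J = F div q"
  have "q > 0" unfolding q_def by simp
  have scale: "2 ^ Suc k * z = 2 ^ N * z / of_int q" for z :: real
  proof -
    have "(2::real) ^ N = 2 ^ (N - Suc k) * 2 ^ Suc k"
      using assms by (metis Suc_leI le_add_diff_inverse2 power_add)
    then show ?thesis unfolding q_def by simp
  qed
  have "\<lfloor>2 ^ Suc k * x\<rfloor> = J"
    unfolding scale J_def F_def using \<open>q > 0\<close> by (subst floor_divide_real_eq_div) simp_all
  then have slope: "tent_slope k x = parity_sign J" by (simp add: tent_slope_def)
  have "J * q \<le> F" "F + 1 \<le> J * q + q"
    unfolding J_def using div_mult_mod_eq[of F q] pos_mod_bound[of q F] pos_mod_sign[of q F] \<open>q > 0\<close>
    by linarith+
  then have "of_int J * of_int q \<le> real_of_int F" "real_of_int F + 1 \<le> of_int J * of_int q + of_int q"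
    by (metis of_int_le_iff of_int_mult, metis of_int_1 of_int_add of_int_le_iff of_int_mult)
  then have within: "of_int J \<le> 2 ^ Suc k * z \<and> 2 ^ Suc k * z \<le> of_int J + 1"
    if "of_int F \<le> 2 ^ N * z" "2 ^ N * z \<le> of_int F + 1" for z :: real
    unfolding scale using that \<open>q > 0\<close> by (simp add: field_simps)
  have "2 ^ N * dyadic_reflect N x = 2 * of_int F + 1 - 2 ^ N * x"
    unfolding dyadic_reflect_def F_def by (simp add: field_simps)
  moreover have "of_int F \<le> 2 ^ N * x" "2 ^ N * x \<le> of_int F + 1"
    unfolding F_def by linarith+
  ultimately have "of_int J \<le> 2 ^ Suc k * z \<and> 2 ^ Suc k * z \<le> of_int J + 1"
    if "z = x \<or> z = dyadic_reflect N x" for z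
    using that within by auto
  then show ?thesis unfolding slope by (intro tent_affine_on_interval) auto
qed

lemma takagi_dyadic_reflect:
  "takagi (dyadic_reflect N x) - takagi x = (\<Sum>k<N. tent_slope k x) * (dyadic_reflect N x - x)"
proof -
  have "takagi (dyadic_reflect N x) - takagi x = (\<Sum>k. tent k (dyadic_reflect N x) - tent k x)"
    unfolding takagi_eq_suminf_tent by (simp add: suminf_diff summable_tent)
  also have "\<dots> = (\<Sum>k<N. tent k (dyadic_reflect N x) - tent k x)"
    by (rule suminf_finite) (auto simp: tent_dyadic_reflect_high)
  also have "\<dots> = (\<Sum>k<N. tent_slope k x) * (dyadic_reflect N x - x)"
    by (simp add: tent_dyadic_reflect_low sum_distrib_right)
  finally show ?thesis .
qed

lemma dyadic_reflect_minus: "dyadic_reflect N x - x = (1 - 2 * frac (2 ^ N * x)) / 2 ^ N"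
  unfolding dyadic_reflect_def frac_def by (simp add: field_simps)

lemma abs_dyadic_reflect_minus_le: "\<bar>dyadic_reflect N x - x\<bar> \<le> 1 / 2 ^ N"
proof -
  have "\<bar>1 - 2 * frac (2 ^ N * x)\<bar> \<le> 1"
    using frac_ge_0[of "2 ^ N * x"] frac_lt_1[of "2 ^ N * x"] by (simp add: abs_le_iff)
  then show ?thesis unfolding dyadic_reflect_minus by (simp add: divide_right_mono)
qed

lemma tent_slope_dyadic_reflect_sign:
  assumes "2 ^ Suc N * x \<notin> \<int>"
  shows "0 < tent_slope N x * (dyadic_reflect N x - x)"
proof -
  have "frac (2 ^ N * x) \<noteq> 1/2"
  proof
    assume "frac (2 ^ N * x) = 1/2"
    then have "2 ^ Suc N * x = of_int (2 * \<lfloor>2 ^ N * x\<rfloor> + 1)" by (simp add: frac_def)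
    then show False using assms by (metis Ints_of_int)
  qed
  then show ?thesis unfolding tent_slope_eq dyadic_reflect_minus by (auto simp: divide_simps)
qed

lemma doubling_reaches_one:
  fixes f :: "nat \<Rightarrow> real"
  assumes "0 < f n0" and "\<And>M. n0 \<le> M \<Longrightarrow> f (Suc M) = 2 * f M"
  shows "\<exists>M. 1 \<le> f M"
proof -
  have "f (n0 + j) = 2 ^ j * f n0" for j
    by (induction j) (simp_all add: assms(2))
  moreover obtain j where "1 / f n0 < 2 ^ j" using real_arch_pow[of 2] by fastforce
  ultimately show ?thesis using assms(1) by (metis less_imp_le pos_divide_less_eq)
qed

lemma frac_double_tent_slope:
  "frac (2 ^ Suc M * x) = 2 * frac (2 ^ M * x) - (if tent_slope M x = 1 then 0 else 1)"
  using floor_double[of "2 ^ M * x"] by (simp add: tent_slope_eq frac_def mult.assoc)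

lemma frequently_tent_slope:
  assumes nondyadic: "\<And>m. 2 ^ m * x \<notin> \<int>" and "c = 1 \<or> c = -1"
  shows "frequently (\<lambda>k. tent_slope k x = c) sequentially"
  unfolding frequently_def
proof
  assume "eventually (\<lambda>k. tent_slope k x \<noteq> c) sequentially"
  then obtain n0 where "\<And>M. n0 \<le> M \<Longrightarrow> tent_slope M x = - c"
    using tent_slope_cases assms(2) unfolding eventually_sequentially by (metis equation_minus_iff)
  then have step: "frac (2 ^ Suc M * x) = 2 * frac (2 ^ M * x) - (if c = 1 then 1 else 0)"
    if "n0 \<le> M" for M
    using that assms(2) frac_double_tent_slope[of M x] by auto
  have frac_pos: "0 < frac (2 ^ M * x)" for M using nondyadic by simp
  show False
  proof (cases "c = 1")
    case True
    have "\<exists>M. 1 \<le> 1 - frac (2 ^ M * x)"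
      using step True frac_lt_1 by (intro doubling_reaches_one[of _ n0]) (simp_all add: algebra_simps)
    then obtain M where "1 \<le> 1 - frac (2 ^ M * x)" by blast
    then show False using frac_pos[of M] by linarith
  next
    case False
    have "\<exists>M. 1 \<le> frac (2 ^ M * x)"
      using step False frac_pos by (intro doubling_reaches_one[of _ n0]) simp_all
    then show False using frac_lt_1 by (metis not_less)
  qed
qed

lemma frequently_last_index:
  assumes "frequently Q sequentially"
  obtains P where "filterlim P at_top sequentially"
    and "eventually (\<lambda>n. P n < n \<and> Q (P n) \<and> (\<forall>k. P n < k \<and> k < n \<longrightarrow> \<not> Q k)) sequentially"
proof
  obtain m0 where "Q m0" using assms frequently_ex by blast
  define P where "P n = Max {k. k < n \<and> Q k}" for n
  have finite: "finite {k. k < n \<and> Q k}" for n by simp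
  have P_ge: "k \<le> P n" if "k < n" "Q k" for k n
    unfolding P_def using that by (intro Max_ge[OF finite]) simp
  show "filterlim P at_top sequentially"
    unfolding filterlim_at_top
  proof
    fix Z
    obtain M where M: "M \<ge> Z" "Q M" using assms unfolding frequently_sequentially by blast
    show "eventually (\<lambda>n. Z \<le> P n) sequentially"
      using eventually_gt_at_top[of M] by eventually_elim (use P_ge M in force)
  qed
  show "eventually (\<lambda>n. P n < n \<and> Q (P n) \<and> (\<forall>k. P n < k \<and> k < n \<longrightarrow> \<not> Q k)) sequentially"
    using eventually_gt_at_top[of m0]
  proof eventually_elim
    case (elim n)
    then have "{k. k < n \<and> Q k} \<noteq> {}" using \<open>Q m0\<close> by blast
    from Max_in[OF finite this] show ?case
      using P_ge unfolding P_def[symmetric] by (auto simp: not_le[symmetric])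
  qed
qed

lemma sum_since_last_sign:
  fixes s :: "nat \<Rightarrow> real"
  assumes "\<And>k. s k = 1 \<or> s k = -1" and "c = 1 \<or> c = -1"
    and "p < n" "s p = c" "\<And>k. p < k \<Longrightarrow> k < n \<Longrightarrow> s k \<noteq> c"
  shows "c * ((\<Sum>k<n. s k) - (\<Sum>k<p. s k)) \<le> 1"
proof -
  have run: "s k = - c" if "p < k" "k < n" for k
    using assms(1)[of k] assms(2) assms(5)[OF that] by auto
  have "(\<Sum>k<m. s k) = (\<Sum>k<p. s k) + c - c * (real m - real (Suc p))"
    if "Suc p \<le> m" "m \<le> n" for m
    using that
  proof (induction m rule: dec_induct)
    case base then show ?case using assms(4) by simp
  next
    case (step m) then show ?case using run[of m] by (simp add: algebra_simps)
  qed
  from this[of n] assms(2,3) show ?thesis by (auto simp: algebra_simps)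
qed

lemma Liminf_le_Liminf_compose:
  fixes f :: "'a \<Rightarrow> 'c :: complete_linorder"
  assumes "filterlim r F G"
  shows "Liminf F f \<le> Liminf G (\<lambda>n. f (r n))"
proof -
  have "\<forall>y<Liminf F f. eventually (\<lambda>x. y < f x) F" using le_Liminf_iff by blast
  then have "\<forall>y<Liminf F f. eventually (\<lambda>n. y < f (r n)) G"
    using assms filterlim_iff by fastforce
  then show ?thesis using le_Liminf_iff by blast
qed

lemma Limsup_compose_le_Limsup:
  fixes f :: "'a \<Rightarrow> 'c :: complete_linorder"
  assumes "filterlim r F G"
  shows "Limsup G (\<lambda>n. f (r n)) \<le> Limsup F f"
proof -
  have "\<forall>y>Limsup F f. eventually (\<lambda>x. y > f x) F" using Limsup_le_iff by blast
  then have "\<forall>y>Limsup F f. eventually (\<lambda>n. y > f (r n)) G"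
    using assms filterlim_iff by fastforce
  then show ?thesis using Limsup_le_iff by blast
qed

lemma dini_lower_left_le_liminf:
  assumes "filterlim h (at_left 0) sequentially"
    and "eventually (\<lambda>n. (f (x + h n) - f x) / h n \<le> a n) sequentially"
  shows "dini_lower_left f x \<le> liminf (\<lambda>n. ereal (a n))"
proof -
  have "dini_lower_left f x \<le> liminf (\<lambda>n. ereal ((f (x + h n) - f x) / h n))"
    unfolding dini_lower_left_def using assms(1) by (rule Liminf_le_Liminf_compose)
  also have "\<dots> \<le> liminf (\<lambda>n. ereal (a n))"
    using assms(2) by (intro Liminf_mono) (auto elim: eventually_mono)
  finally show ?thesis .
qed

lemma limsup_le_dini_upper_right:
  assumes "filterlim h (at_right 0) sequentially"
    and "eventually (\<lambda>n. a n \<le> (f (x + h n) - f x) / h n) sequentially"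
  shows "limsup (\<lambda>n. ereal (a n)) \<le> dini_upper_right f x"
proof -
  have "limsup (\<lambda>n. ereal (a n)) \<le> limsup (\<lambda>n. ereal ((f (x + h n) - f x) / h n))"
    using assms(2) by (intro Limsup_mono) (auto elim: eventually_mono)
  also have "\<dots> \<le> dini_upper_right f x"
    unfolding dini_upper_right_def using assms(1) by (rule Limsup_compose_le_Limsup)
  finally show ?thesis .
qed

lemma takagi_reflection_quotients:
  assumes "x \<notin> dyadics" and "c = 1 \<or> c = -1"
  obtains h where "(h \<longlongrightarrow> 0) sequentially"
    and "eventually (\<lambda>n. 0 < c * h n \<and>
           c * ((\<Sum>k<n. tent_slope k x) - (takagi (x + h n) - takagi x) / h n) \<le> 1) sequentially"
proof -
  note nondyadic = not_Ints_if_nondyadic[OF assms(1)]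
  obtain P where P: "filterlim P at_top sequentially"
    and last: "eventually (\<lambda>n. P n < n \<and> tent_slope (P n) x = c \<and>
                 (\<forall>k. P n < k \<and> k < n \<longrightarrow> tent_slope k x \<noteq> c)) sequentially"
    using frequently_last_index[OF frequently_tent_slope[OF nondyadic assms(2)]] by blast
  define h where "h n = dyadic_reflect (P n) x - x" for n
  have "((\<lambda>n. (1/2::real) ^ n) \<longlongrightarrow> 0) sequentially" by (rule LIMSEQ_power_zero) simp
  then have "((\<lambda>n. (1/2::real) ^ P n) \<longlongrightarrow> 0) sequentially" using P by (rule filterlim_compose)
  then have "(h \<longlongrightarrow> 0) sequentially"
    unfolding h_def
    by (rule Lim_null_comparison[rotated])
       (simp add: abs_dyadic_reflect_minus_le power_one_over)
  moreover have "eventually (\<lambda>n. 0 < c * h n \<and>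
           c * ((\<Sum>k<n. tent_slope k x) - (takagi (x + h n) - takagi x) / h n) \<le> 1) sequentially"
    using last
  proof eventually_elim
    case (elim n)
    have "0 < c * h n"
      using tent_slope_dyadic_reflect_sign[OF nondyadic] elim unfolding h_def by metis
    then have "(takagi (x + h n) - takagi x) / h n = (\<Sum>k<P n. tent_slope k x)"
      using takagi_dyadic_reflect[of "P n" x] unfolding h_def by auto
    with \<open>0 < c * h n\<close> show ?case
      using sum_since_last_sign[OF tent_slope_cases assms(2)] elim by auto
  qed
  ultimately show ?thesis using that by blast
qed

lemma dini_lower_left_takagi_le:
  assumes "x \<notin> dyadics"
  shows "dini_lower_left takagi x \<le> liminf (\<lambda>n. ereal (\<Sum>k<n. tent_slope k x)) + 1"
proof -
  define S where "S n = (\<Sum>k<n. tent_slope k x)" for n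
  define q where "q h = (takagi (x + h) - takagi x) / h" for h
  obtain h where "(h \<longlongrightarrow> 0) sequentially"
    and left: "eventually (\<lambda>n. 0 < - h n \<and> - (S n - q (h n)) \<le> 1) sequentially"
    using takagi_reflection_quotients[OF assms, of "-1"] unfolding S_def q_def by auto
  moreover from left have "eventually (\<lambda>n. h n \<in> {..<0} \<and> h n \<noteq> 0) sequentially"
    by eventually_elim auto
  ultimately have "filterlim h (at_left 0) sequentially" unfolding filterlim_at by blast
  moreover from left have "eventually (\<lambda>n. q (h n) \<le> S n + 1) sequentially"
    by eventually_elim auto
  ultimately have "dini_lower_left takagi x \<le> liminf (\<lambda>n. ereal (S n + 1))"
    unfolding q_def by (rule dini_lower_left_le_liminf)
  also have "\<dots> = liminf (\<lambda>n. ereal (S n)) + 1"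
    by (simp add: Liminf_add_ereal_right[symmetric])
  finally show ?thesis unfolding S_def .
qed

lemma limsup_le_dini_upper_right_takagi:
  assumes "x \<notin> dyadics"
  shows "limsup (\<lambda>n. ereal (\<Sum>k<n. tent_slope k x)) - 1 \<le> dini_upper_right takagi x"
proof -
  define S where "S n = (\<Sum>k<n. tent_slope k x)" for n
  define q where "q h = (takagi (x + h) - takagi x) / h" for h
  obtain h where "(h \<longlongrightarrow> 0) sequentially"
    and right: "eventually (\<lambda>n. 0 < h n \<and> S n - q (h n) \<le> 1) sequentially"
    using takagi_reflection_quotients[OF assms, of 1] unfolding S_def q_def by auto
  moreover from right have "eventually (\<lambda>n. h n \<in> {0<..} \<and> h n \<noteq> 0) sequentially"
    by eventually_elim auto
  ultimately have "filterlim h (at_right 0) sequentially" unfolding filterlim_at by blast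
  moreover from right have "eventually (\<lambda>n. S n - 1 \<le> q (h n)) sequentially"
    by eventually_elim auto
  ultimately have "limsup (\<lambda>n. ereal (S n - 1)) \<le> dini_upper_right takagi x"
    unfolding q_def by (rule limsup_le_dini_upper_right)
  moreover have "limsup (\<lambda>n. ereal (S n - 1)) = limsup (\<lambda>n. ereal (S n)) - 1"
  proof -
    have "limsup (\<lambda>n. ereal (S n - 1)) = limsup (\<lambda>n. ereal (S n) + (-1))"
      by (simp add: one_ereal_def)
    also have "\<dots> = limsup (\<lambda>n. ereal (S n)) - 1"
      by (subst Limsup_add_ereal_right) (simp_all add: minus_ereal_def)
    finally show ?thesis .
  qed
  ultimately show ?thesis unfolding S_def by simp
qed

theorem proposition2p1:
  fixes x :: real
  assumes "x \<notin> dyadics"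
  shows "dini_lower_left takagi x \<le> liminf (\<lambda>n. ereal (deriv (Gn n) x)) + 1 \<and>
         dini_upper_right takagi x \<ge> limsup (\<lambda>n. ereal (deriv (Gn n) x)) - 1"
  using dini_lower_left_takagi_le[OF assms] limsup_le_dini_upper_right_takagi[OF assms]
  by (simp add: deriv_Gn[OF assms])

end
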